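(* Fix $0<\gamma_1<\gamma_2$, $c\ge0$ and $d\ge0$, and let $\varphi(t)=D_{\gamma_1}(t)-cD_{\gamma_2}(t)+d$. Then: 1. The equation $\varphi(t)=0$ has a unique solution $t\in[\gamma_1,\gamma_2]$ if and only if $d\le cD_{\gamma_2}(\gamma_1)$. 2. If $d> cD_{\gamma_2}(\gamma_1)$, then the smallest value of $\varphi(t)$ over $t\in[\gamma_1,\gamma_2]$ is attained at $t=\gamma_1$ and equals $-cD_{\gamma_2}(\gamma_1)+d>0$. 3. If $d\le cD_{\gamma_2}(\gamma_1)$, the solution $t^*$ of $\varphi(t)=0$ in $[\gamma_1,\gamma_2]$ is given by $t^*=\dfrac{\gamma_2-\gamma_1-d}{\log(\gamma_2/\gamma_1)}$ when $c=1$, and when $c\neq1$ by $$t^*=\gamma_1^{1/(1-c)}\gamma_2^{-c/(1-c)}e^{z^*+1}=-\frac{\gamma_1+d-c\gamma_2}{(1-c)z^*},$$ where $z^*$ is a solution (given by an appropriate real branch of the Lambert $W$-function) of $$ze^z=-\frac1e\cdot\frac{1}{1-c}\Big(1+\frac{d-c\gamma_2}{\gamma_1}\Big)\Big(\frac{\gamma_2}{\gamma_1}\Big)^{c/(1-c)}.$$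
   Context: For $\gamma>0$ and $t\ge0$, $D_\gamma(t)=t\log(t/\gamma)-t+\gamma$ (natural logarithm). The Lambert $W$-function solves $W(x)e^{W(x)}=x$ for $x\ge-1/e$ and has two real branches $W_0$ (values $\ge-1$) and $W_{-1}$ (values $\le -1$). *)

theory Defs
  imports Complex_Main
begin

text \<open>Relative-entropy-type function: D_gamma(t) = t log(t/gamma) - t + gamma (natural log).
  For t = 0 Isabelle's convention ln 0 = 0 gives 0 * ln 0 = 0, matching the usual convention.\<close>
definition D :: "real \<Rightarrow> real \<Rightarrow> real" where
  "D \<gamma> t = t * ln (t / \<gamma>) - t + \<gamma>"

text \<open>The two real branches of the Lambert W function (meaningful for x \<ge> -1/e).\<close>
definition lambertW0 :: "real \<Rightarrow> real" where
  "lambertW0 x = (THE w. w \<ge> -1 \<and> w * exp w = x)"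

definition lambertWm1 :: "real \<Rightarrow> real" where
  "lambertWm1 x = (THE w. w \<le> -1 \<and> w * exp w = x)"

end

theory Submission
  imports Defs
begin

text \<open>On \<open>[\<gamma>1, \<gamma>2]\<close> the derivative \<open>ln (t / \<gamma>1) - c ln (t / \<gamma>2)\<close> of \<open>\<phi>\<close> is positive, so \<open>\<phi>\<close> is
  strictly increasing there, with \<open>\<phi> \<gamma>1 = d - c D \<gamma>2 \<gamma>1\<close> and \<open>\<phi> \<gamma>2 = D \<gamma>1 \<gamma>2 + d > 0\<close>; parts 1
  and 2 follow by the intermediate value theorem. For \<open>c \<noteq> 1\<close> put
  \<open>L = (ln \<gamma>1 - c ln \<gamma>2) / (1 - c)\<close> and \<open>z = ln t - L - 1\<close>, so that \<open>t = exp L exp (z + 1)\<close>; then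
  \<open>\<phi> t = (1 - c) t z + (\<gamma>1 + d - c \<gamma>2)\<close>, and substituting \<open>t\<close> into \<open>\<phi> t = 0\<close> gives the equation
  for \<open>z exp z\<close>. Every real \<open>z\<close> lies on one of the two branches of \<open>W\<close> because \<open>w exp w\<close> is
  strictly monotone on each side of \<open>-1\<close>.\<close>

lemma has_real_derivative_mult_exp:
  "((\<lambda>w::real. w * exp w) has_real_derivative ((1 + x) * exp x)) (at x)"
  by (auto intro!: derivative_eq_intros simp: algebra_simps)

lemma mult_exp_strict_mono:
  fixes a b :: real
  assumes "-1 \<le> a" "a < b"
  shows "a * exp a < b * exp b"
proof (rule DERIV_pos_imp_increasing_open[OF assms(2)])
  fix x assume "a < x" "x < b"
  then show "\<exists>y. ((\<lambda>w. w * exp w) has_real_derivative y) (at x) \<and> 0 < y"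
    using assms has_real_derivative_mult_exp by (intro exI[of _ "(1 + x) * exp x"]) auto
qed (intro continuous_intros)

lemma mult_exp_strict_antimono:
  fixes a b :: real
  assumes "b \<le> -1" "a < b"
  shows "b * exp b < a * exp a"
proof (rule DERIV_neg_imp_decreasing_open[OF assms(2)])
  fix x assume "a < x" "x < b"
  then show "\<exists>y. ((\<lambda>w. w * exp w) has_real_derivative y) (at x) \<and> y < 0"
    using assms has_real_derivative_mult_exp
    by (intro exI[of _ "(1 + x) * exp x"]) (auto simp: mult_neg_pos)
qed (intro continuous_intros)

lemma lambertW0_mult_exp:
  assumes "-1 \<le> z"
  shows "lambertW0 (z * exp z) = z"
  unfolding lambertW0_def
proof (rule the_equality)
  fix w assume "-1 \<le> w \<and> w * exp w = z * exp z"
  then show "w = z"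
    using mult_exp_strict_mono[of w z] mult_exp_strict_mono[of z w] assms
    by (cases w z rule: linorder_cases) auto
qed (use assms in simp)

lemma lambertWm1_mult_exp:
  assumes "z \<le> -1"
  shows "lambertWm1 (z * exp z) = z"
  unfolding lambertWm1_def
proof (rule the_equality)
  fix w assume "w \<le> -1 \<and> w * exp w = z * exp z"
  then show "w = z"
    using mult_exp_strict_antimono[of w z] mult_exp_strict_antimono[of z w] assms
    by (cases w z rule: linorder_cases) auto
qed (use assms in simp)

lemma lambertW_mult_exp_cases: "z = lambertW0 (z * exp z) \<or> z = lambertWm1 (z * exp z)"
  using lambertW0_mult_exp[of z] lambertWm1_mult_exp[of z] by linarith

lemma D_self [simp]: "D \<gamma> \<gamma> = 0"
  by (cases "\<gamma> = 0") (simp_all add: D_def)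

lemma D_pos:
  assumes "0 < \<gamma>" "0 < t" "t \<noteq> \<gamma>"
  shows "0 < D \<gamma> t"
proof -
  have "ln \<gamma> - ln t < (\<gamma> - t) / t"
    using ln_diff_less[of \<gamma> t] assms by simp
  then have "t - \<gamma> < t * (ln t - ln \<gamma>)"
    using assms by (simp add: field_simps)
  then show ?thesis
    using assms by (simp add: D_def ln_div)
qed

lemma has_real_derivative_D:
  assumes "0 < \<gamma>" "0 < t"
  shows "(D \<gamma> has_real_derivative ln (t / \<gamma>)) (at t)"
proof -
  have "((\<lambda>t. t * ln (t / \<gamma>) - t + \<gamma>) has_real_derivative ln (t / \<gamma>)) (at t)"
    using assms by (auto intro!: derivative_eq_intros simp: field_simps)
  then show ?thesis
    unfolding D_def[abs_def] .
qed

lemma continuous_on_D_combination: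
  assumes "0 < a" "0 < \<gamma>1" "0 < \<gamma>2"
  shows "continuous_on {a..b} (\<lambda>t. D \<gamma>1 t - c * D \<gamma>2 t + d)"
  unfolding D_def using assms by (intro continuous_intros) auto

lemma strict_mono_on_D_combination:
  assumes "0 < \<gamma>1" "0 \<le> c"
  shows "strict_mono_on {\<gamma>1..\<gamma>2} (\<lambda>t. D \<gamma>1 t - c * D \<gamma>2 t + d)"
proof (rule strict_mono_onI)
  fix a b assume ab: "a \<in> {\<gamma>1..\<gamma>2}" "b \<in> {\<gamma>1..\<gamma>2}" "a < b"
  show "D \<gamma>1 a - c * D \<gamma>2 a + d < D \<gamma>1 b - c * D \<gamma>2 b + d"
  proof (rule DERIV_pos_imp_increasing_open[OF \<open>a < b\<close>])
    fix t assume t: "a < t" "t < b"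
    have "0 < ln (t / \<gamma>1)" "ln (t / \<gamma>2) < 0"
      using t ab assms by auto
    then have "0 < ln (t / \<gamma>1) - c * ln (t / \<gamma>2)"
      using mult_nonneg_nonpos[of c "ln (t / \<gamma>2)"] \<open>0 \<le> c\<close> by linarith
    moreover have "((\<lambda>t. D \<gamma>1 t - c * D \<gamma>2 t + d) has_real_derivative
        ln (t / \<gamma>1) - c * ln (t / \<gamma>2)) (at t)"
      using t ab assms
      by (auto intro!: derivative_eq_intros has_real_derivative_D)
    ultimately show "\<exists>y. ((\<lambda>t. D \<gamma>1 t - c * D \<gamma>2 t + d) has_real_derivative y) (at t) \<and> 0 < y"
      by blast
  qed (use ab assms in \<open>auto intro: continuous_on_D_combination\<close>)
qed

lemma strict_mono_on_ex1_zero_iff: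
  fixes f :: "real \<Rightarrow> real"
  assumes "a \<le> b" "strict_mono_on {a..b} f" "continuous_on {a..b} f" "0 \<le> f b"
  shows "(\<exists>!t. t \<in> {a..b} \<and> f t = 0) \<longleftrightarrow> f a \<le> 0"
proof
  assume "\<exists>!t. t \<in> {a..b} \<and> f t = 0"
  then obtain t where "t \<in> {a..b}" "f t = 0"
    by blast
  then show "f a \<le> 0"
    using strict_mono_on_leD[OF assms(2), of a t] \<open>a \<le> b\<close> by auto
next
  assume "f a \<le> 0"
  then obtain t where t: "t \<in> {a..b}" "f t = 0"
    using IVT'[of f a 0 b] assms by auto
  moreover have "inj_on f {a..b}"
    using assms(2) by (rule strict_mono_on_imp_inj_on)
  ultimately show "\<exists>!t. t \<in> {a..b} \<and> f t = 0"
    by (auto simp: inj_on_def)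
qed

lemma D_difference_root:
  assumes "0 < \<gamma>1" "\<gamma>1 < \<gamma>2" "0 < t" "D \<gamma>1 t - D \<gamma>2 t + d = 0"
  shows "t = (\<gamma>2 - \<gamma>1 - d) / ln (\<gamma>2 / \<gamma>1)"
proof -
  have "t * ln (\<gamma>2 / \<gamma>1) = \<gamma>2 - \<gamma>1 - d"
    using assms by (simp add: D_def ln_div algebra_simps)
  moreover have "0 < ln (\<gamma>2 / \<gamma>1)"
    using assms by simp
  ultimately show ?thesis
    by (simp add: field_simps)
qed

lemma D_combination_eq:
  assumes "0 < \<gamma>1" "0 < \<gamma>2" "0 < t" "c \<noteq> 1"
    and "L = (ln \<gamma>1 - c * ln \<gamma>2) / (1 - c)"
  shows "D \<gamma>1 t - c * D \<gamma>2 t + d = (1 - c) * t * (ln t - L - 1) + (\<gamma>1 + d - c * \<gamma>2)"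
proof -
  have "D \<gamma>1 t - c * D \<gamma>2 t + d
      = (1 - c) * t * ln t - t * (ln \<gamma>1 - c * ln \<gamma>2) - (1 - c) * t + (\<gamma>1 + d - c * \<gamma>2)"
    using assms by (simp add: D_def ln_div algebra_simps)
  also have "ln \<gamma>1 - c * ln \<gamma>2 = (1 - c) * L"
    using assms by simp
  finally show ?thesis
    by (simp add: algebra_simps)
qed

lemma D_combination_root_Lambert:
  assumes "0 < \<gamma>1" "0 < \<gamma>2" "0 < t" "c \<noteq> 1"
    and root: "D \<gamma>1 t - c * D \<gamma>2 t + d = 0"
  obtains z where
    "z * exp z = - (1 / exp 1) * (1 / (1 - c)) * (1 + (d - c * \<gamma>2) / \<gamma>1)
                   * (\<gamma>2 / \<gamma>1) powr (c / (1 - c))"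
    "t = \<gamma>1 powr (1 / (1 - c)) * \<gamma>2 powr (- c / (1 - c)) * exp (z + 1)"
    "(1 - c) * z * t = - (\<gamma>1 + d - c * \<gamma>2)"
proof
  define L where "L = (ln \<gamma>1 - c * ln \<gamma>2) / (1 - c)"
  define z where "z = ln t - L - 1"
  show zt: "(1 - c) * z * t = - (\<gamma>1 + d - c * \<gamma>2)"
    using D_combination_eq[OF assms(1-4) L_def, of d] root
    unfolding z_def by (simp add: algebra_simps)
  have t_eq: "t = exp L * exp (z + 1)"
    using \<open>0 < t\<close> by (simp add: z_def flip: exp_add)
  have "\<gamma>1 powr (1 / (1 - c)) * \<gamma>2 powr (- c / (1 - c)) = exp L"
    using assms by (simp add: L_def powr_def diff_divide_distrib flip: exp_add)
  then show "t = \<gamma>1 powr (1 / (1 - c)) * \<gamma>2 powr (- c / (1 - c)) * exp (z + 1)"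
    using t_eq by simp
  have exp_minus_L: "exp (- L) = (\<gamma>2 / \<gamma>1) powr (c / (1 - c)) / \<gamma>1"
  proof -
    have "- L = c / (1 - c) * (ln \<gamma>2 - ln \<gamma>1) - ln \<gamma>1"
      using \<open>c \<noteq> 1\<close> by (simp add: L_def field_simps)
    then show ?thesis
      using assms by (simp add: powr_def ln_div exp_diff)
  qed
  have "z * exp z = z * t * exp (- L) / exp 1"
    using t_eq by (simp add: exp_add exp_minus field_simps)
  also have "z * t = - (\<gamma>1 + d - c * \<gamma>2) / (1 - c)"
    using zt \<open>c \<noteq> 1\<close> by (simp add: field_simps)
  also note exp_minus_L
  also have "- (\<gamma>1 + d - c * \<gamma>2) / (1 - c) * ((\<gamma>2 / \<gamma>1) powr (c / (1 - c)) / \<gamma>1) / exp 1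
      = - (1 / exp 1) * (1 / (1 - c)) * (1 + (d - c * \<gamma>2) / \<gamma>1) * (\<gamma>2 / \<gamma>1) powr (c / (1 - c))"
    using \<open>0 < \<gamma>1\<close> by (simp add: divide_simps) (simp add: algebra_simps)
  finally show "z * exp z = - (1 / exp 1) * (1 / (1 - c)) * (1 + (d - c * \<gamma>2) / \<gamma>1)
                   * (\<gamma>2 / \<gamma>1) powr (c / (1 - c))" .
qed

theorem lemma6:
  fixes \<gamma>1 \<gamma>2 c d :: real and \<phi> :: "real \<Rightarrow> real"
  assumes "0 < \<gamma>1" and "\<gamma>1 < \<gamma>2" and "c \<ge> 0" and "d \<ge> 0"
    and \<phi>_def: "\<phi> = (\<lambda>t. D \<gamma>1 t - c * D \<gamma>2 t + d)"
  shows "((\<exists>!t. t \<in> {\<gamma>1..\<gamma>2} \<and> \<phi> t = 0) \<longleftrightarrow> d \<le> c * D \<gamma>2 \<gamma>1)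
    \<and> (d > c * D \<gamma>2 \<gamma>1 \<longrightarrow>
           (\<forall>t\<in>{\<gamma>1..\<gamma>2}. \<phi> \<gamma>1 \<le> \<phi> t) \<and> \<phi> \<gamma>1 = - c * D \<gamma>2 \<gamma>1 + d \<and> - c * D \<gamma>2 \<gamma>1 + d > 0)
    \<and> (d \<le> c * D \<gamma>2 \<gamma>1 \<longrightarrow> (\<forall>t\<in>{\<gamma>1..\<gamma>2}. \<phi> t = 0 \<longrightarrow>
           (c = 1 \<longrightarrow> t = (\<gamma>2 - \<gamma>1 - d) / ln (\<gamma>2 / \<gamma>1)) \<and>
           (c \<noteq> 1 \<longrightarrow>
              (\<exists>z. z * exp z = - (1 / exp 1) * (1 / (1 - c)) * (1 + (d - c * \<gamma>2) / \<gamma>1)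
                                  * (\<gamma>2 / \<gamma>1) powr (c / (1 - c))
                 \<and> (z = lambertW0 (z * exp z) \<or> z = lambertWm1 (z * exp z))
                 \<and> t = \<gamma>1 powr (1 / (1 - c)) * \<gamma>2 powr (- c / (1 - c)) * exp (z + 1)
                 \<and> (z \<noteq> 0 \<longrightarrow> t = - (\<gamma>1 + d - c * \<gamma>2) / ((1 - c) * z))))))"
proof -
  have mono: "strict_mono_on {\<gamma>1..\<gamma>2} \<phi>"
    unfolding \<phi>_def using assms by (intro strict_mono_on_D_combination) auto
  have \<phi>_\<gamma>1: "\<phi> \<gamma>1 = - c * D \<gamma>2 \<gamma>1 + d"
    unfolding \<phi>_def by simp
  have "0 < \<phi> \<gamma>2"
    unfolding \<phi>_def using assms D_pos[of \<gamma>1 \<gamma>2] by simp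
  then have "(\<exists>!t. t \<in> {\<gamma>1..\<gamma>2} \<and> \<phi> t = 0) \<longleftrightarrow> d \<le> c * D \<gamma>2 \<gamma>1"
    using strict_mono_on_ex1_zero_iff[OF _ mono] continuous_on_D_combination[of \<gamma>1 \<gamma>1 \<gamma>2]
      assms \<phi>_\<gamma>1 by auto
  moreover have "\<phi> \<gamma>1 \<le> \<phi> t" if "t \<in> {\<gamma>1..\<gamma>2}" for t
    using strict_mono_on_leD[OF mono] that by auto
  moreover have "t = (\<gamma>2 - \<gamma>1 - d) / ln (\<gamma>2 / \<gamma>1)"
    if "t \<in> {\<gamma>1..\<gamma>2}" "\<phi> t = 0" "c = 1" for t
    using D_difference_root[of \<gamma>1 \<gamma>2 t d] that assms by auto
  moreover have "\<exists>z. z * exp z = - (1 / exp 1) * (1 / (1 - c)) * (1 + (d - c * \<gamma>2) / \<gamma>1)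
                                  * (\<gamma>2 / \<gamma>1) powr (c / (1 - c))
                 \<and> (z = lambertW0 (z * exp z) \<or> z = lambertWm1 (z * exp z))
                 \<and> t = \<gamma>1 powr (1 / (1 - c)) * \<gamma>2 powr (- c / (1 - c)) * exp (z + 1)
                 \<and> (z \<noteq> 0 \<longrightarrow> t = - (\<gamma>1 + d - c * \<gamma>2) / ((1 - c) * z))"
    if "t \<in> {\<gamma>1..\<gamma>2}" "\<phi> t = 0" "c \<noteq> 1" for t
  proof -
    have "0 < t" "D \<gamma>1 t - c * D \<gamma>2 t + d = 0"
      using that assms unfolding \<phi>_def by auto
    then obtain z where "z * exp z = - (1 / exp 1) * (1 / (1 - c)) * (1 + (d - c * \<gamma>2) / \<gamma>1)
                                  * (\<gamma>2 / \<gamma>1) powr (c / (1 - c))"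
      "t = \<gamma>1 powr (1 / (1 - c)) * \<gamma>2 powr (- c / (1 - c)) * exp (z + 1)"
      "(1 - c) * z * t = - (\<gamma>1 + d - c * \<gamma>2)"
      using D_combination_root_Lambert[of \<gamma>1 \<gamma>2 t c d] \<open>c \<noteq> 1\<close> assms by auto
    then show ?thesis
      using lambertW_mult_exp_cases[of z] \<open>c \<noteq> 1\<close> by (intro exI[of _ z]) (auto simp: field_simps)
  qed
  ultimately show ?thesis
    using \<phi>_\<gamma>1 by auto
qed

end
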